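(* Let $n\ge2$, let $\delta_n=(n-1,n-2,\ldots,2,1)$, and let $\lambda\subseteq\delta_n$ be a partition. Define $\varphi$ on $n\times n$ matrices $M$ by $\varphi(M)_{ij}=M_{ij}+1$ if $j=n-i+2$ (so $2\le i\le n$), and $\varphi(M)_{ij}=M_{ij}$ otherwise. Then $\varphi$ is an integral equivalence from $\mathrm{PASM}(\delta_n/\lambda,n,n)$ onto $\mathrm{ASMCRY}(\lambda,n)$.
   Context: A partition $\mu=(\mu_1\ge\mu_2\ge\cdots)$ is a weakly decreasing sequence of nonnegative integers with finitely many nonzero terms, identified with the set of matrix positions $\{(i,j):i\ge1,1\le j\le\mu_i\}$; $\mu\subseteq\nu$ means $\mu_i\le\nu_i$ for all $i$. For $\mu\subseteq\delta_n$, the $n\times n$ matrix $M^\mu$ has entries $M^\mu_{1,\mu_1+1}=1$; for each $1\le k\le n-1$ with $\mu_k>\mu_{k+1}$, $M^\mu_{k+1,\mu_{k+1}+1}=1$ and $M^\mu_{k+1,\mu_k+1}=-1$; all other entries $0$. $\mathrm{PASM}(\delta_n/\lambda,n,n)$ is the convex hull in $\mathbb{R}^{n^2}$ of $\{M^\mu:\lambda\subseteq\mu\subseteq\delta_n\}$. An $n\times n$ alternating sign matrix is a matrix with entries in $\{-1,0,1\}$ whose partial column sums $\sum_{i'\le i}M_{i'j}$ and partial row sums $\sum_{j'\le j}M_{ij'}$ all lie in $\{0,1\}$ and whose every full row and column sum equals $1$; $\mathrm{ASM}(n)$ is the convex hull of these. $\mathrm{ASMCRY}(\lambda,n)=\{(a_{ij})\in\mathrm{ASM}(n):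 a_{ij}=0 \text{ whenever } i+j\ge n+3 \text{ or } (i,j)\in\lambda\}$. An integral equivalence between integer polytopes $\mathcal{P}\subset\mathbb{R}^d$, $\mathcal{Q}\subset\mathbb{R}^r$ is an affine map $\mathbb{R}^d\to\mathbb{R}^r$ mapping $\mathcal{P}$ bijectively onto $\mathcal{Q}$ and $\mathbb{Z}^d\cap\mathrm{aff}(\mathcal{P})$ bijectively onto $\mathbb{Z}^r\cap\mathrm{aff}(\mathcal{Q})$. *)

theory Defs
  imports "HOL-Analysis.Analysis" "HOL-Library.Function_Algebras"
begin

text \<open>An n x n real matrix is modelled as a function M :: nat => nat => real,
  entry M i j at row i, column j, with 1-based indices; the matrices considered
  vanish outside {1..n} x {1..n}.  We equip functions with the pointwise
  real vector space structure, so that convex hull, affine hull and linearity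
  from HOL-Analysis apply.\<close>

instantiation "fun" :: (type, real_vector) real_vector
begin
definition scaleR_fun_def: "scaleR r f = (\<lambda>x. scaleR r (f x))"
instance
  by standard (auto simp: scaleR_fun_def fun_eq_iff scaleR_add_right scaleR_add_left)
end

type_synonym mat = "nat \<Rightarrow> nat \<Rightarrow> real"

text \<open>A partition is a function mu :: nat => nat, mu i being the i-th part
  (i >= 1); we normalise mu 0 = 0.\<close>

definition is_partition :: "(nat \<Rightarrow> nat) \<Rightarrow> bool" where
  "is_partition mu \<longleftrightarrow> mu 0 = 0 \<and> (\<forall>i\<ge>1. mu (Suc i) \<le> mu i) \<and> finite {i. mu i \<noteq> 0}"

definition part_le :: "(nat \<Rightarrow> nat) \<Rightarrow> (nat \<Rightarrow> nat) \<Rightarrow> bool" where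
  "part_le mu nu \<longleftrightarrow> (\<forall>i\<ge>1. mu i \<le> nu i)"

definition delta :: "nat \<Rightarrow> nat \<Rightarrow> nat" where
  "delta n i = (if i = 0 then 0 else n - i)"

definition cells :: "(nat \<Rightarrow> nat) \<Rightarrow> (nat \<times> nat) set" where
  "cells mu = {(i, j). 1 \<le> i \<and> 1 \<le> j \<and> j \<le> mu i}"

definition Mmu :: "nat \<Rightarrow> (nat \<Rightarrow> nat) \<Rightarrow> mat" where
  "Mmu n mu i j =
     (if i = 1 \<and> j = mu 1 + 1 then 1
      else if 2 \<le> i \<and> i \<le> n \<and> mu (i - 1) > mu i \<and> j = mu i + 1 then 1
      else if 2 \<le> i \<and> i \<le> n \<and> mu (i - 1) > mu i \<and> j = mu (i - 1) + 1 then -1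
      else 0)"

definition PASM :: "nat \<Rightarrow> (nat \<Rightarrow> nat) \<Rightarrow> mat set" where
  "PASM n lam = convex hull
     {Mmu n mu | mu. is_partition mu \<and> part_le lam mu \<and> part_le mu (delta n)}"

definition is_ASM :: "nat \<Rightarrow> mat \<Rightarrow> bool" where
  "is_ASM n A \<longleftrightarrow>
     (\<forall>i j. A i j \<in> {-1, 0, 1}) \<and>
     (\<forall>i j. \<not> (1 \<le> i \<and> i \<le> n \<and> 1 \<le> j \<and> j \<le> n) \<longrightarrow> A i j = 0) \<and>
     (\<forall>i\<in>{1..n}. \<forall>j\<in>{1..n}. (\<Sum>i'=1..i. A i' j) \<in> {0, 1}) \<and>
     (\<forall>i\<in>{1..n}. \<forall>j\<in>{1..n}. (\<Sum>j'=1..j. A i j') \<in> {0, 1}) \<and>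
     (\<forall>i\<in>{1..n}. (\<Sum>j=1..n. A i j) = 1) \<and>
     (\<forall>j\<in>{1..n}. (\<Sum>i=1..n. A i j) = 1)"

definition ASM :: "nat \<Rightarrow> mat set" where
  "ASM n = convex hull {A. is_ASM n A}"

definition ASMCRY :: "(nat \<Rightarrow> nat) \<Rightarrow> nat \<Rightarrow> mat set" where
  "ASMCRY lam n = {a \<in> ASM n. \<forall>i j. (i + j \<ge> n + 3 \<or> (i, j) \<in> cells lam) \<longrightarrow> a i j = 0}"

definition integer_mat :: "mat \<Rightarrow> bool" where
  "integer_mat M \<longleftrightarrow> (\<forall>i j. M i j \<in> \<int>)"

definition affine_map :: "(mat \<Rightarrow> mat) \<Rightarrow> bool" where
  "affine_map f \<longleftrightarrow> (\<exists>g c. linear g \<and> f = (\<lambda>x. g x + c))"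

definition integral_equiv :: "(mat \<Rightarrow> mat) \<Rightarrow> mat set \<Rightarrow> mat set \<Rightarrow> bool" where
  "integral_equiv f P Q \<longleftrightarrow>
     affine_map f \<and> bij_betw f P Q \<and>
     bij_betw f {x \<in> affine hull P. integer_mat x} {y \<in> affine hull Q. integer_mat y}"

definition phi :: "nat \<Rightarrow> mat \<Rightarrow> mat" where
  "phi n M i j = (if 2 \<le> i \<and> i \<le> n \<and> j = n - i + 2 then M i j + 1 else M i j)"

end

theory Submission
  imports Defs
begin

(* The map phi is the translation by the integer matrix with ones at the positions
  (i, n - i + 2), so everything reduces to phi ` PASM = ASMCRY.  Since translations commute
  with convex hulls, this follows from two facts.

  First, ASMCRY is the convex hull of the ASMs vanishing on the prescribed positions: the cells
  of lam are left-justified and the region i + j >= n + 3 is right-closed in every row, so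
  vanishing there is expressed by prefix resp. suffix row sums, which are nonnegative on every
  ASM; a convex combination can only make such a sum vanish if all its ASMs with positive
  weight do.

  Second, phi maps the vertices M^mu bijectively onto these ASMs.  The column partial sums of
  phi(M^mu) form the 0/1 matrix whose row i has ones exactly in the last i - 1 columns and in
  column mu_i + 1.  Conversely, in an ASM vanishing for i + j >= n + 3 the first i rows sum to
  one in each of the last i - 1 columns, so row i of the column partial sums has a single
  further one, in a column mu_i + 1 <= n + 1 - i; nonnegativity of the row prefix sums forces
  mu to be a partition, and vanishing on the cells of lam forces lam <= mu. *)

section \<open>Translation by an integer matrix\<close>

lemma integer_mat_add_iff:
  assumes "integer_mat c"
  shows "integer_mat (c + x) \<longleftrightarrow> integer_mat x"
proof -
  have "(c i j + x i j \<in> \<int>) \<longleftrightarrow> x i j \<in> \<int>" for i j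
    using assms Ints_add Ints_diff unfolding integer_mat_def
    by (metis add_diff_cancel_left')
  then show ?thesis by (simp add: integer_mat_def)
qed

lemma integral_equiv_translation:
  assumes "integer_mat c"
  shows "integral_equiv ((+) c) P ((+) c ` P)"
proof -
  have "affine_map ((+) c)"
    unfolding affine_map_def by (rule exI[of _ id], rule exI[of _ c]) (auto simp: linear_id add.commute)
  moreover have "inj ((+) c)"
    by (rule injI) simp
  moreover have "(+) c ` {x \<in> affine hull P. integer_mat x} = {y \<in> affine hull ((+) c ` P). integer_mat y}"
    using affine_hull_translation[of c P] integer_mat_add_iff[OF assms] by auto
  ultimately show ?thesis
    unfolding integral_equiv_def by (auto simp: bij_betw_def inj_on_def)
qed

definition phi_offset :: "nat \<Rightarrow> mat" where
  "phi_offset n i j = (if 2 \<le> i \<and> i \<le> n \<and> j = n - i + 2 then 1 else 0)"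

lemma phi_eq_translation: "phi n = (+) (phi_offset n)"
  by (auto simp: fun_eq_iff phi_def phi_offset_def)

lemma integer_mat_phi_offset: "integer_mat (phi_offset n)"
  by (simp add: integer_mat_def phi_offset_def)

section \<open>Faces cut out by nonnegative row sums\<close>

lemma convex_hull_face_nonneg_linear:
  fixes f :: "'k \<Rightarrow> 'a::real_vector \<Rightarrow> real"
  assumes a: "a \<in> convex hull V"
    and lin: "\<And>k. k \<in> K \<Longrightarrow> linear (f k)"
    and nonneg: "\<And>k v. k \<in> K \<Longrightarrow> v \<in> V \<Longrightarrow> 0 \<le> f k v"
    and zero: "\<And>k. k \<in> K \<Longrightarrow> f k a = 0"
  shows "a \<in> convex hull {v \<in> V. \<forall>k\<in>K. f k v = 0}"
proof -
  obtain S u where S: "finite S" "S \<subseteq> V" "\<forall>v\<in>S. 0 \<le> u v" "sum u S = 1"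
    and a_eq: "(\<Sum>v\<in>S. u v *\<^sub>R v) = a"
    using a unfolding convex_hull_explicit by blast
  define S' where "S' = {v \<in> S. u v \<noteq> 0}"
  have "f k v = 0" if "v \<in> S'" "k \<in> K" for v k
  proof -
    have "f k a = (\<Sum>w\<in>S. u w * f k w)"
      unfolding a_eq[symmetric] using lin[OF \<open>k \<in> K\<close>] by (simp add: linear_sum linear_scale)
    then have "(\<Sum>w\<in>S. u w * f k w) = 0"
      using zero[OF \<open>k \<in> K\<close>] by simp
    then have "u v * f k v = 0"
      using S nonneg \<open>k \<in> K\<close> that(1) by (subst (asm) sum_nonneg_eq_0_iff) (auto simp: S'_def)
    then show ?thesis using that(1) by (simp add: S'_def)
  qed
  then have "S' \<subseteq> {v \<in> V. \<forall>k\<in>K. f k v = 0}"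
    using S(2) by (auto simp: S'_def)
  moreover have S'_sums: "sum u S' = sum u S" "(\<Sum>v\<in>S'. u v *\<^sub>R v) = (\<Sum>v\<in>S. u v *\<^sub>R v)"
    unfolding S'_def using S(1) by (auto intro!: sum.mono_neutral_left)
  ultimately have "(\<Sum>v\<in>S'. u v *\<^sub>R v) \<in> convex hull {v \<in> V. \<forall>k\<in>K. f k v = 0}"
    using S by (intro convex_sum) (auto simp: S'_def intro: hull_inc)
  then show ?thesis
    using S'_sums a_eq by simp
qed

definition crystal_ASMs :: "(nat \<Rightarrow> nat) \<Rightarrow> nat \<Rightarrow> mat set" where
  "crystal_ASMs lam n =
     {A. is_ASM n A \<and> (\<forall>i j. (i + j \<ge> n + 3 \<or> (i, j) \<in> cells lam) \<longrightarrow> A i j = 0)}"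

lemma linear_row_sum: "linear (\<lambda>A::mat. \<Sum>j\<in>J. A i j)"
  by (rule linearI) (simp_all add: plus_fun_def scaleR_fun_def sum.distrib sum_distrib_left)

lemma ASM_outside_zero:
  "is_ASM n A \<Longrightarrow> \<not> (1 \<le> i \<and> i \<le> n \<and> 1 \<le> j \<and> j \<le> n) \<Longrightarrow> A i j = 0"
  unfolding is_ASM_def by blast

lemma ASM_row_prefix_01:
  assumes "is_ASM n A"
  shows "(\<Sum>j'=1..j. A i j') \<in> {0, 1}"
proof (cases "1 \<le> i \<and> i \<le> n")
  case False
  then have "A i j' = 0" for j'
    using ASM_outside_zero[OF assms] by blast
  then show ?thesis by simp
next
  case i: True
  show ?thesis
  proof (cases "j \<le> n")
    case True
    then show ?thesis using assms i by (cases "j = 0") (auto simp: is_ASM_def)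
  next
    case False
    then have "(\<Sum>j'=1..j. A i j') = (\<Sum>j'=1..n. A i j') + (\<Sum>j'=n+1..j. A i j')"
      using sum.ub_add_nat[of 1 n "A i" "j - n"] by simp
    also have "\<dots> = 1"
      using assms i ASM_outside_zero[OF assms] by (simp add: is_ASM_def)
    finally show ?thesis by simp
  qed
qed

lemma ASM_row_suffix_01:
  assumes "is_ASM n A" "1 \<le> k"
  shows "(\<Sum>j'=k..n. A i j') \<in> {0, 1}"
proof (cases "1 \<le> i \<and> i \<le> n \<and> k \<le> n")
  case False
  then show ?thesis using ASM_outside_zero[OF assms(1)] by auto
next
  case True
  then have "(\<Sum>j'=1..n. A i j') = (\<Sum>j'=1..k-1. A i j') + (\<Sum>j'=k..n. A i j')"
    using assms(2) sum.ub_add_nat[of 1 "k - 1" "A i" "n - (k - 1)"] by simp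
  moreover have "(\<Sum>j'=1..n. A i j') = 1"
    using assms(1) True by (simp add: is_ASM_def)
  ultimately show ?thesis
    using ASM_row_prefix_01[OF assms(1), where j = "k - 1" and i = i] by auto
qed

lemma crystal_ASMsI:
  assumes v: "is_ASM n v"
    and prefix: "\<And>i j. (i, j) \<in> cells lam \<Longrightarrow> (\<Sum>j'=1..j. v i j') = 0"
    and suffix: "\<And>i j. n + 3 \<le> i + j \<Longrightarrow> 1 \<le> j \<Longrightarrow> (\<Sum>j'=j..n. v i j') = 0"
  shows "v \<in> crystal_ASMs lam n"
proof -
  have "v i j = 0" if "(i, j) \<in> cells lam" for i j
  proof -
    have "(\<Sum>j'=1..j-1. v i j') = 0"
    proof (cases "j = 1")
      case False
      then have "(i, j - 1) \<in> cells lam" using that by (auto simp: cells_def)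
      then show ?thesis by (rule prefix)
    qed simp
    moreover have "(\<Sum>j'=1..j. v i j') = (\<Sum>j'=1..j-1. v i j') + v i j"
      using that by (cases j) (auto simp: cells_def)
    ultimately show ?thesis using prefix[OF that] by simp
  qed
  moreover have "v i j = 0" if "n + 3 \<le> i + j" for i j
  proof (cases "j = 0")
    case False
    have "(\<Sum>j'=j..n. v i j') = v i j + (\<Sum>j'=Suc j..n. v i j')"
      using ASM_outside_zero[OF v] by (cases "j \<le> n") (simp_all add: sum.atLeast_Suc_atMost)
    then show ?thesis using suffix[of i j] suffix[of i "Suc j"] that False by simp
  qed (use ASM_outside_zero[OF v] in auto)
  ultimately show ?thesis
    using v by (auto simp: crystal_ASMs_def)
qed

lemma ASMCRY_subset_convex_hull: "ASMCRY lam n \<subseteq> convex hull crystal_ASMs lam n"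
proof
  fix a assume "a \<in> ASMCRY lam n"
  then have a: "a \<in> convex hull {A. is_ASM n A}"
    and a0: "\<And>i j. i + j \<ge> n + 3 \<or> (i, j) \<in> cells lam \<Longrightarrow> a i j = 0"
    by (auto simp: ASMCRY_def ASM_def)
  let ?far = "{(i, j). n + 3 \<le> i + j \<and> 1 \<le> j}"
  let ?prefix_zero = "\<lambda>v. \<forall>k\<in>cells lam. (\<Sum>j'=1..snd k. v (fst k) j') = 0"
  have "a \<in> convex hull {v \<in> {A. is_ASM n A}. ?prefix_zero v}"
  proof (rule convex_hull_face_nonneg_linear[OF a linear_row_sum])
    show "0 \<le> (\<Sum>j'=1..snd k. v (fst k) j')" if "v \<in> {A. is_ASM n A}" for k v
      using that ASM_row_prefix_01[of n v "fst k" "snd k"] by auto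
    show "(\<Sum>j'=1..snd k. a (fst k) j') = 0" if "k \<in> cells lam" for k
      using that a0 by (auto simp: cells_def)
  qed
  then have "a \<in> convex hull {v \<in> {v \<in> {A. is_ASM n A}. ?prefix_zero v}.
      \<forall>k\<in>?far. (\<Sum>j'=snd k..n. v (fst k) j') = 0}"
  proof (rule convex_hull_face_nonneg_linear[OF _ linear_row_sum])
    show "0 \<le> (\<Sum>j'=snd k..n. v (fst k) j')"
      if "k \<in> ?far" "v \<in> {v \<in> {A. is_ASM n A}. ?prefix_zero v}" for k v
      using that ASM_row_suffix_01[of n v "snd k" "fst k"] by auto
    show "(\<Sum>j'=snd k..n. a (fst k) j') = 0" if "k \<in> ?far" for k
      using that a0 by auto
  qed
  also have "\<dots> \<subseteq> convex hull crystal_ASMs lam n"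
    by (rule hull_mono) (auto intro!: crystal_ASMsI)
  finally show "a \<in> convex hull crystal_ASMs lam n" .
qed

lemma convex_hull_crystal_ASMs_subset: "convex hull crystal_ASMs lam n \<subseteq> ASMCRY lam n"
proof
  fix a assume a: "a \<in> convex hull crystal_ASMs lam n"
  have "convex hull crystal_ASMs lam n \<subseteq> ASM n"
    unfolding ASM_def crystal_ASMs_def by (intro hull_mono) blast
  moreover have "a i j = 0" if "i + j \<ge> n + 3 \<or> (i, j) \<in> cells lam" for i j
  proof -
    have "convex {x::mat. x i j = 0}"
      by (simp add: convex_def plus_fun_def scaleR_fun_def)
    then have "convex hull crystal_ASMs lam n \<subseteq> {x. x i j = 0}"
      using that by (intro hull_minimal) (auto simp: crystal_ASMs_def)
    then show ?thesis using a by auto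
  qed
  ultimately show "a \<in> ASMCRY lam n" using a by (auto simp: ASMCRY_def)
qed

lemma ASMCRY_eq_convex_hull: "ASMCRY lam n = convex hull crystal_ASMs lam n"
  using ASMCRY_subset_convex_hull convex_hull_crystal_ASMs_subset by (rule equalityI)

section \<open>Column partial sums of the vertices\<close>

lemma is_partition_antimono:
  assumes "is_partition lam" "1 \<le> i" "i \<le> i'"
  shows "lam i' \<le> lam i"
  by (rule lift_Suc_antimono_le_ivl[of "{1..}" lam]) (use assms in \<open>auto simp: is_partition_def\<close>)

(* The column partial sums of phi n (M^mu), see col_psum_phi_Mmu. *)
definition stair :: "nat \<Rightarrow> (nat \<Rightarrow> nat) \<Rightarrow> mat" where
  "stair n mu i j = (if 1 \<le> i \<and> (n + 2 \<le> i + j \<or> j = mu i + 1) then 1 else 0)"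

definition col_psum :: "mat \<Rightarrow> mat" where
  "col_psum A i j = (\<Sum>i'=1..i. A i' j)"

lemma col_psum_diff: "1 \<le> i \<Longrightarrow> A i j = col_psum A i j - col_psum A (i - 1) j"
  by (cases i) (simp_all add: col_psum_def)

lemma stair_row_prefix:
  assumes "1 \<le> i" "mu i + i \<le> n"
  shows "(\<Sum>j'=1..j. stair n mu i j') = real (j + i - (n + 1)) + (if mu i < j then 1 else 0)"
proof (induction j)
  case (Suc j)
  have "i \<le> n" using assms(2) by simp
  have "stair n mu i (Suc j) = (if n + 2 \<le> i + Suc j \<or> Suc j = mu i + 1 then 1 else 0)"
    using assms(1) by (simp add: stair_def)
  then show ?case
    using Suc assms \<open>i \<le> n\<close> by (auto simp: of_nat_diff)
qed (use assms in simp)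

lemma stair_diff_row_prefix:
  assumes "2 \<le> i" "j \<le> n" "mu i + i \<le> n" "mu (i - 1) + i \<le> n + 1"
  shows "(\<Sum>j'=1..j. stair n mu i j' - stair n mu (i - 1) j') =
    (if n + 2 \<le> i + j then 1 else 0) + (if mu i < j then 1 else 0) - (if mu (i - 1) < j then 1 else 0)"
proof -
  have "(\<Sum>j'=1..j. stair n mu i j' - stair n mu (i - 1) j')
      = real (j + i - (n + 1)) + (if mu i < j then 1 else 0)
        - (real (j + (i - 1) - (n + 1)) + (if mu (i - 1) < j then 1 else 0))"
    using stair_row_prefix[of i mu n j] stair_row_prefix[of "i - 1" mu n j] assms
    by (simp add: sum_subtractf)
  also have "\<dots> = (if n + 2 \<le> i + j then 1 else 0) + (if mu i < j then 1 else 0)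
      - (if mu (i - 1) < j then 1 else 0)"
    using assms by (auto simp: of_nat_diff)
  finally show ?thesis .
qed

locale delta_subpartition =
  fixes n :: nat and mu :: "nat \<Rightarrow> nat"
  assumes below_delta: "1 \<le> i \<Longrightarrow> i \<le> n \<Longrightarrow> mu i + i \<le> n"
    and antitone: "2 \<le> i \<Longrightarrow> i \<le> n \<Longrightarrow> mu i \<le> mu (i - 1)"
begin

lemma below_delta_pred:
  assumes "2 \<le> i" "i \<le> n"
  shows "mu (i - 1) + i \<le> n + 1"
proof -
  have "mu (i - 1) + (i - 1) \<le> n"
    using assms by (intro below_delta) auto
  then show ?thesis using assms by linarith
qed

lemma phi_Mmu_eq_stair_diff:
  assumes "1 \<le> i" "i \<le> n" "1 \<le> j" "j \<le> n"
  shows "phi n (Mmu n mu) i j = stair n mu i j - stair n mu (i - 1) j"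
proof -
  obtain k where i: "i = Suc k"
    using assms(1) by (cases i) auto
  show ?thesis
  proof (cases "k = 0")
    case True
    then show ?thesis
      using assms i below_delta[of 1] by (auto simp: phi_def Mmu_def stair_def)
  next
    case False
    then have "mu (Suc k) + k < n" "mu k + k \<le> n" "mu (Suc k) \<le> mu k"
      using assms i below_delta[of i] below_delta[of k] antitone[of i] by auto
    then show ?thesis
      using assms i False by (auto simp: phi_def Mmu_def stair_def)
  qed
qed

lemma phi_Mmu_outside:
  assumes "1 \<le> n" "\<not> (1 \<le> i \<and> i \<le> n \<and> 1 \<le> j \<and> j \<le> n)"
  shows "phi n (Mmu n mu) i j = 0"
proof (cases "2 \<le> i \<and> i \<le> n")
  case True
  then obtain k where "i = Suc k" "1 \<le> k" "mu (Suc k) + k < n" "mu k + k \<le> n"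
    using below_delta[of i] below_delta[of "i - 1"] by (cases i) auto
  then show ?thesis
    using assms by (auto simp: phi_def Mmu_def)
next
  case False
  then show ?thesis
    using assms below_delta[of 1] by (auto simp: phi_def Mmu_def)
qed

lemma col_psum_phi_Mmu:
  assumes "i \<le> n" "1 \<le> j" "j \<le> n"
  shows "col_psum (phi n (Mmu n mu)) i j = stair n mu i j"
  using assms
proof (induction i)
  case (Suc i)
  then show ?case
    using phi_Mmu_eq_stair_diff[of "Suc i" j] by (simp add: col_psum_def)
qed (simp add: col_psum_def stair_def)

lemma phi_Mmu_row_prefix:
  assumes "1 \<le> i" "i \<le> n" "j \<le> n"
  shows "(\<Sum>j'=1..j. phi n (Mmu n mu) i j') =
    (if i = 1 then (if mu 1 < j then 1 else 0)
     else (if n + 2 \<le> i + j then 1 else 0) + (if mu i < j then 1 else 0)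
       - (if mu (i - 1) < j then 1 else 0))"
proof -
  have psum: "(\<Sum>j'=1..j. phi n (Mmu n mu) i j') = (\<Sum>j'=1..j. stair n mu i j' - stair n mu (i - 1) j')"
    using assms phi_Mmu_eq_stair_diff by (intro sum.cong) auto
  show ?thesis
  proof (cases "i = 1")
    case True
    have "(\<Sum>j'=1..j. stair n mu 0 j') = 0"
      by (simp add: stair_def)
    then show ?thesis
      using True psum assms stair_row_prefix[of 1 mu n j] below_delta[of 1] by (simp add: sum_subtractf)
  next
    case False
    then show ?thesis
      using psum assms stair_diff_row_prefix[of i j n mu] below_delta[of i] below_delta_pred[of i]
      by simp
  qed
qed

lemma phi_Mmu_is_ASM:
  assumes "1 \<le> n"
  shows "is_ASM n (phi n (Mmu n mu))"
proof -
  have entries: "phi n (Mmu n mu) i j \<in> {-1, 0, 1}" for i j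
    using phi_Mmu_eq_stair_diff[of i j] phi_Mmu_outside[OF assms, of i j]
    by (cases "1 \<le> i \<and> i \<le> n \<and> 1 \<le> j \<and> j \<le> n") (auto simp: stair_def)
  have row_prefix: "(\<Sum>j'=1..j. phi n (Mmu n mu) i j') \<in> {0, 1}"
    if "1 \<le> i" "i \<le> n" "j \<le> n" for i j
  proof (cases "i = 1")
    case False
    then have "mu i \<le> mu (i - 1)" "mu (i - 1) + i \<le> n + 1"
      using that antitone[of i] below_delta_pred[of i] by auto
    then show ?thesis
      using that False phi_Mmu_row_prefix[of i j] by auto
  qed (use that phi_Mmu_row_prefix[of i j] in auto)
  have row_total: "(\<Sum>j'=1..n. phi n (Mmu n mu) i j') = 1" if "1 \<le> i" "i \<le> n" for i
  proof (cases "i = 1")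
    case False
    then have "mu i < n" "mu (i - 1) < n"
      using that below_delta[of i] below_delta_pred[of i] by auto
    then show ?thesis
      using that False phi_Mmu_row_prefix[of i n] by auto
  qed (use that phi_Mmu_row_prefix[of i n] below_delta[of 1] in auto)
  have col_prefix: "(\<Sum>i'=1..i. phi n (Mmu n mu) i' j) \<in> {0, 1}" if "i \<le> n" "1 \<le> j" "j \<le> n" for i j
    using col_psum_phi_Mmu[OF that] by (simp add: col_psum_def stair_def)
  have col_total: "(\<Sum>i'=1..n. phi n (Mmu n mu) i' j) = 1" if "1 \<le> j" "j \<le> n" for j
    using col_psum_phi_Mmu[of n j] that below_delta[of n] assms by (auto simp: col_psum_def stair_def)
  show ?thesis
    unfolding is_ASM_def
    using entries phi_Mmu_outside[OF assms] row_prefix row_total col_prefix col_total by auto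
qed

lemma phi_Mmu_in_crystal_ASMs:
  assumes "1 \<le> n" "part_le lam mu"
  shows "phi n (Mmu n mu) \<in> crystal_ASMs lam n"
proof -
  have "phi n (Mmu n mu) i j = 0" if "n + 3 \<le> i + j \<or> (i, j) \<in> cells lam" for i j
  proof (cases "1 \<le> i \<and> i \<le> n \<and> 1 \<le> j \<and> j \<le> n")
    case False
    then show ?thesis using phi_Mmu_outside[OF assms(1)] by blast
  next
    case ij: True
    have "stair n mu i j = stair n mu (i - 1) j"
    proof (cases "n + 3 \<le> i + j")
      case True
      then show ?thesis using ij by (auto simp: stair_def)
    next
      case False
      then have "j \<le> mu i" "mu i + i \<le> n"
        using that assms(2) ij below_delta by (auto simp: cells_def part_le_def)
      moreover have "mu i \<le> mu (i - 1)" if "2 \<le> i"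
        using antitone that ij by auto
      ultimately show ?thesis
        using ij by (cases "i = 1") (auto simp: stair_def)
    qed
    then show ?thesis using phi_Mmu_eq_stair_diff ij by simp
  qed
  then show ?thesis
    using phi_Mmu_is_ASM[OF assms(1)] by (auto simp: crystal_ASMs_def)
qed

lemma partition_if_support:
  assumes "\<And>i. \<not> (1 \<le> i \<and> i \<le> n) \<Longrightarrow> mu i = 0"
  shows "is_partition mu" "part_le mu (delta n)"
proof -
  have "{i. mu i \<noteq> 0} \<subseteq> {1..n}"
  proof
    fix i assume "i \<in> {i. mu i \<noteq> 0}"
    then show "i \<in> {1..n}" using assms[of i] by auto
  qed
  moreover have "mu (Suc i) \<le> mu i" if "1 \<le> i" for i
    using that antitone[of "Suc i"] assms[of "Suc i"] by (cases "Suc i \<le> n") auto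
  ultimately show "is_partition mu"
    unfolding is_partition_def using assms[of 0] by (auto intro: finite_subset)
  show "part_le mu (delta n)"
    using assms below_delta by (fastforce simp: part_le_def delta_def)
qed

end

lemma delta_subpartitionI:
  assumes "is_partition mu" "part_le mu (delta n)"
  shows "delta_subpartition n mu"
proof
  show "mu i + i \<le> n" if "1 \<le> i" "i \<le> n" for i
    using assms(2) that by (auto simp: part_le_def delta_def)
  show "mu i \<le> mu (i - 1)" if "2 \<le> i" "i \<le> n" for i
    using is_partition_antimono[OF assms(1), of "i - 1" i] that by auto
qed

section \<open>Recovering the partition from an ASM\<close>

lemma sum_01_ex1:
  fixes f :: "'a \<Rightarrow> real"
  assumes "finite J" "\<And>j. j \<in> J \<Longrightarrow> f j \<in> {0, 1}" "sum f J = 1"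
  shows "\<exists>!j. j \<in> J \<and> f j = 1"
proof -
  have "sum f J = sum (\<lambda>j. if f j = 1 then 1 else 0) J"
    using assms(2) by (intro sum.cong) auto
  also have "\<dots> = real (card {j \<in> J. f j = 1})"
    using assms(1) by (simp add: sum.If_cases Int_def conj_commute)
  finally have "card {j \<in> J. f j = 1} = 1"
    using assms(3) by simp
  then obtain x where "{j \<in> J. f j = 1} = {x}"
    by (rule card_1_singletonE)
  then show ?thesis by (auto simp: set_eq_iff)
qed

lemma ASM_col_psum_01:
  assumes "is_ASM n A" "i \<le> n" "1 \<le> j" "j \<le> n"
  shows "col_psum A i j \<in> {0, 1}"
  using assms by (cases "i = 0") (auto simp: is_ASM_def col_psum_def)

lemma ASM_col_psum_far:
  assumes "is_ASM n A" "\<And>i j. n + 3 \<le> i + j \<Longrightarrow> A i j = 0"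
    and "i \<le> n" "1 \<le> j" "j \<le> n" "n + 2 \<le> i + j"
  shows "col_psum A i j = 1"
proof -
  have "(\<Sum>i'=1..n. A i' j) = col_psum A i j + (\<Sum>i'=i+1..n. A i' j)"
    using sum.ub_add_nat[of 1 i "\<lambda>i'. A i' j" "n - i"] assms(3) by (simp add: col_psum_def)
  moreover have "(\<Sum>i'=i+1..n. A i' j) = 0"
    using assms(2,6) by (intro sum.neutral) auto
  moreover have "(\<Sum>i'=1..n. A i' j) = 1"
    using assms(1,4,5) by (simp add: is_ASM_def)
  ultimately show ?thesis by simp
qed

lemma ASM_col_psum_row_sum:
  assumes "is_ASM n A" "i \<le> n"
  shows "(\<Sum>j=1..n. col_psum A i j) = real i"
proof -
  have "(\<Sum>j=1..n. col_psum A i j) = (\<Sum>i'=1..i. \<Sum>j=1..n. A i' j)"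
    unfolding col_psum_def by (rule sum.swap)
  also have "\<dots> = (\<Sum>i'=1..i. 1)"
    using assms by (intro sum.cong) (auto simp: is_ASM_def)
  finally show ?thesis by simp
qed

lemma ASM_col_psum_unique_one:
  assumes "is_ASM n A" "\<And>i j. n + 3 \<le> i + j \<Longrightarrow> A i j = 0" "1 \<le> i" "i \<le> n"
  shows "\<exists>!j. j \<in> {1..n + 1 - i} \<and> col_psum A i j = 1"
proof (rule sum_01_ex1)
  have "(\<Sum>j=1..n. col_psum A i j) = (\<Sum>j=1..n+1-i. col_psum A i j) + (\<Sum>j=n+2-i..n. col_psum A i j)"
    using sum.ub_add_nat[of 1 "n + 1 - i" "col_psum A i" "i - 1"] assms(3,4) by (simp add: Suc_diff_le)
  moreover have "(\<Sum>j=n+2-i..n. col_psum A i j) = (\<Sum>j=n+2-i..n. 1)"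
    using assms by (intro sum.cong ASM_col_psum_far) auto
  ultimately show "(\<Sum>j=1..n+1-i. col_psum A i j) = 1"
    using ASM_col_psum_row_sum[OF assms(1,4)] assms(3,4) by (simp add: of_nat_diff)
  show "col_psum A i j \<in> {0, 1}" if "j \<in> {1..n + 1 - i}" for j
    using ASM_col_psum_01[OF assms(1,4), of j] that assms(3) by auto
qed simp

lemma ASM_col_psum_eq_stair:
  assumes "is_ASM n A" "\<And>i j. n + 3 \<le> i + j \<Longrightarrow> A i j = 0"
  obtains mu where "\<And>i. 1 \<le> i \<Longrightarrow> i \<le> n \<Longrightarrow> mu i + i \<le> n"
    and "\<And>i. \<not> (1 \<le> i \<and> i \<le> n) \<Longrightarrow> mu i = 0"
    and "\<And>i j. i \<le> n \<Longrightarrow> 1 \<le> j \<Longrightarrow> j \<le> n \<Longrightarrow> col_psum A i j = stair n mu i j"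
proof
  define mu where "mu i =
    (if 1 \<le> i \<and> i \<le> n then (THE j. j \<in> {1..n + 1 - i} \<and> col_psum A i j = 1) - 1 else 0)" for i
  have mu: "mu i + 1 \<in> {1..n + 1 - i} \<and> col_psum A i (mu i + 1) = 1"
    and mu_unique: "\<And>j. j \<in> {1..n + 1 - i} \<Longrightarrow> col_psum A i j = 1 \<Longrightarrow> j = mu i + 1"
    if "1 \<le> i" "i \<le> n" for i
    using theI'[OF ASM_col_psum_unique_one[OF assms that]] ASM_col_psum_unique_one[OF assms that] that
    by (auto simp: mu_def)
  show "mu i + i \<le> n" if "1 \<le> i" "i \<le> n" for i
    using mu[OF that] that by auto
  show "mu i = 0" if "\<not> (1 \<le> i \<and> i \<le> n)" for i
    unfolding mu_def by (rule if_not_P[OF that])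
  show "col_psum A i j = stair n mu i j" if "i \<le> n" "1 \<le> j" "j \<le> n" for i j
  proof (cases "i = 0 \<or> n + 2 \<le> i + j")
    case True
    then show ?thesis
      using that ASM_col_psum_far[OF assms that] by (auto simp: col_psum_def stair_def)
  next
    case False
    then have "col_psum A i j = 1 \<longleftrightarrow> j = mu i + 1"
      using that mu[of i] mu_unique[of i j] by auto
    then show ?thesis
      using False that ASM_col_psum_01[OF assms(1) that] by (auto simp: stair_def)
  qed
qed

lemma col_psum_zero_on_cells:
  assumes "is_partition lam" "\<And>i j. (i, j) \<in> cells lam \<Longrightarrow> A i j = 0" "(i, j) \<in> cells lam"
  shows "col_psum A i j = 0"
  unfolding col_psum_def
proof (rule sum.neutral, safe)
  fix i' assume "i' \<in> {1..i}"
  then have "lam i \<le> lam i'"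
    using is_partition_antimono[OF assms(1)] by auto
  then show "A i' j = 0"
    using assms(2,3) \<open>i' \<in> {1..i}\<close> by (auto simp: cells_def)
qed

lemma ASM_eq_phi_Mmu:
  assumes "1 \<le> n" "is_ASM n A" "\<And>i j. n + 3 \<le> i + j \<Longrightarrow> A i j = 0"
  obtains mu where "delta_subpartition n mu" "\<And>i. \<not> (1 \<le> i \<and> i \<le> n) \<Longrightarrow> mu i = 0"
    and "\<And>i j. i \<le> n \<Longrightarrow> 1 \<le> j \<Longrightarrow> j \<le> n \<Longrightarrow> col_psum A i j = stair n mu i j"
    and "A = phi n (Mmu n mu)"
proof -
  obtain mu where below_delta: "\<And>i. 1 \<le> i \<Longrightarrow> i \<le> n \<Longrightarrow> mu i + i \<le> n"
    and support: "\<And>i. \<not> (1 \<le> i \<and> i \<le> n) \<Longrightarrow> mu i = 0"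
    and col_psum_A: "\<And>i j. i \<le> n \<Longrightarrow> 1 \<le> j \<Longrightarrow> j \<le> n \<Longrightarrow> col_psum A i j = stair n mu i j"
    using ASM_col_psum_eq_stair[OF assms(2,3)] by blast
  have A_eq: "A i j = stair n mu i j - stair n mu (i - 1) j"
    if "1 \<le> i" "i \<le> n" "1 \<le> j" "j \<le> n" for i j
  proof -
    have "A i j = col_psum A i j - col_psum A (i - 1) j"
      by (rule col_psum_diff[OF that(1)])
    then show ?thesis
      using col_psum_A[of i j] col_psum_A[of "i - 1" j] that by simp
  qed
  have antitone: "mu i \<le> mu (i - 1)" if "2 \<le> i" "i \<le> n" for i
  proof (rule ccontr)
    assume "\<not> mu i \<le> mu (i - 1)"
    moreover have "mu i + i \<le> n"
      using that by (intro below_delta) auto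
    moreover have "mu (i - 1) + (i - 1) \<le> n"
      by (rule below_delta) (use that in auto)
    ultimately have "(\<Sum>j'=1..mu (i - 1) + 1. A i j') =
        (\<Sum>j'=1..mu (i - 1) + 1. stair n mu i j' - stair n mu (i - 1) j')"
      using that by (intro sum.cong) (auto simp: A_eq)
    also have "\<dots> = -1"
      using stair_diff_row_prefix[of i "mu (i - 1) + 1" n mu] \<open>\<not> mu i \<le> mu (i - 1)\<close>
        \<open>mu i + i \<le> n\<close> \<open>mu (i - 1) + (i - 1) \<le> n\<close> that by simp
    finally show False
      using ASM_row_prefix_01[OF assms(2), of i "mu (i - 1) + 1"] by simp
  qed
  interpret delta_subpartition n mu
    using below_delta antitone by unfold_locales
  have "A = phi n (Mmu n mu)"
    using ASM_outside_zero[OF assms(2)] phi_Mmu_outside[OF assms(1)] A_eq phi_Mmu_eq_stair_diff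
    by (intro ext) metis
  then show ?thesis
    using that delta_subpartition_axioms support col_psum_A by blast
qed

lemma crystal_ASM_eq_phi_Mmu:
  assumes "1 \<le> n" "is_partition lam" "part_le lam (delta n)" "A \<in> crystal_ASMs lam n"
  obtains mu where "is_partition mu" "part_le lam mu" "part_le mu (delta n)" "A = phi n (Mmu n mu)"
proof -
  have A: "is_ASM n A" and far: "\<And>i j. n + 3 \<le> i + j \<Longrightarrow> A i j = 0"
    and on_cells: "\<And>i j. (i, j) \<in> cells lam \<Longrightarrow> A i j = 0"
    using assms(4) by (auto simp: crystal_ASMs_def)
  obtain mu where mu: "delta_subpartition n mu" and support: "\<And>i. \<not> (1 \<le> i \<and> i \<le> n) \<Longrightarrow> mu i = 0"
    and col_psum_A: "\<And>i j. i \<le> n \<Longrightarrow> 1 \<le> j \<Longrightarrow> j \<le> n \<Longrightarrow> col_psum A i j = stair n mu i j"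
    and A_eq: "A = phi n (Mmu n mu)"
    using ASM_eq_phi_Mmu[OF assms(1) A far] by blast
  have "part_le lam mu"
    unfolding part_le_def
  proof (intro allI impI)
    fix i :: nat assume "1 \<le> i"
    show "lam i \<le> mu i"
    proof (cases "i \<le> n")
      case True
      then have "col_psum A i (mu i + 1) = 1"
        using col_psum_A[of i "mu i + 1"] delta_subpartition.below_delta[OF mu, of i] \<open>1 \<le> i\<close>
        by (simp add: stair_def)
      then have "(i, mu i + 1) \<notin> cells lam"
        using col_psum_zero_on_cells[OF assms(2) on_cells] by auto
      then show ?thesis using \<open>1 \<le> i\<close> by (auto simp: cells_def)
    next
      case False
      have "lam i \<le> n - i"
        using assms(3) \<open>1 \<le> i\<close> by (simp add: part_le_def delta_def)
      then show ?thesis using False by simp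
    qed
  qed
  then show ?thesis
    using that A_eq delta_subpartition.partition_if_support[OF mu support] by blast
qed

lemma phi_Mmu_image:
  assumes "1 \<le> n" "is_partition lam" "part_le lam (delta n)"
  shows "phi n ` {Mmu n mu | mu. is_partition mu \<and> part_le lam mu \<and> part_le mu (delta n)}
    = crystal_ASMs lam n"
proof (intro equalityI subsetI)
  fix A assume "A \<in> phi n ` {Mmu n mu | mu. is_partition mu \<and> part_le lam mu \<and> part_le mu (delta n)}"
  then obtain mu where "is_partition mu" "part_le lam mu" "part_le mu (delta n)" "A = phi n (Mmu n mu)"
    by blast
  then show "A \<in> crystal_ASMs lam n"
    using delta_subpartition.phi_Mmu_in_crystal_ASMs[OF delta_subpartitionI assms(1)] by blast
next
  fix A assume "A \<in> crystal_ASMs lam n"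
  then show "A \<in> phi n ` {Mmu n mu | mu. is_partition mu \<and> part_le lam mu \<and> part_le mu (delta n)}"
    by (rule crystal_ASM_eq_phi_Mmu[OF assms]) blast
qed

theorem mainTheorem8:
  fixes n :: nat and lam :: "nat \<Rightarrow> nat"
  assumes "n \<ge> 2" and "is_partition lam" and "part_le lam (delta n)"
  shows "integral_equiv (phi n) (PASM n lam) (ASMCRY lam n)"
proof -
  let ?vertices = "{Mmu n mu | mu. is_partition mu \<and> part_le lam mu \<and> part_le mu (delta n)}"
  have "phi n ` PASM n lam = (+) (phi_offset n) ` (convex hull ?vertices)"
    by (simp add: PASM_def phi_eq_translation)
  also have "\<dots> = convex hull (phi n ` ?vertices)"
    by (simp add: convex_hull_translation phi_eq_translation)
  also have "\<dots> = ASMCRY lam n"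
    using phi_Mmu_image assms by (simp add: ASMCRY_eq_convex_hull)
  finally show ?thesis
    using integral_equiv_translation[OF integer_mat_phi_offset, of n "PASM n lam"]
    by (simp add: phi_eq_translation)
qed

end
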